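(* Every unbounded moral-hazard preference $\succeq$ on $W$ admits exactly one parsimonious representation $(c,u)$.
   Context: $S$ non-empty finite, $\Delta(S)$ its simplex; $\Pi\subseteq\mathbb{R}$ convex; $\Delta(\Pi)$ finite-support distributions on $\Pi$; contracts $w:S\to\Delta(\Pi)$, set $W$; constant contracts identified with elements of $\Delta(\Pi)$. Mixtures $\alpha x+(1-\alpha)x'$ are probability mixtures. $u:\Pi\to\mathbb{R}$ extends to $\Delta(\Pi)$ by expectation. Fixed reference prizes $\pi_0<\pi_1$ in $\Pi$; $u$ is normalised iff $\{u(\pi_0),u(\pi_1)\}=\{0,1\}$. Grounded: infimum $0$. A parsimonious representation of $\succeq$ is a pair $(c,u)$ with $c:\Delta(S)\to[0,\infty]$ grounded, convex and lower semi-continuous and $u:\Pi\to\mathbb{R}$ strictly increasing and normalised, such that for all $w,w'\in W$: $w\succeq w'$ iff $\max_{p\in\Delta(S)}[-c(p)+\sum_s u(w(s))p(s)]\ge \max_{p\in\Delta(S)}[-c(p)+\sum_s u(w'(s))p(s)]$. A moral-hazard preference is a relation generated by a standard moral-hazard model (compact convex effort set $E\subseteq\mathbb{R}^n$, grounded lsc cost $C:E\to\mathbb{R}_+$, continuous $e\mapsto P_e\in\Delta(S)$, strictly increasing normalised $u$, agent valuing $w$ by $\sup_{\mu\in\Delta(E)}\int_E[-C(e)+\sum_s u(w(s))P_e(s)]\mu(\mathrm{d}e)$); equivalently, a relation admitting some parsimonious representation. $\succeq$ is unbounded iff there are $x\succ y$ in $\Delta(\Pi)$ such that for every $\alpha\in(0,1)$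 there exist $z,z'\in\Delta(\Pi)$ with $y\succ \alpha z+(1-\alpha)x$ and $\alpha z'+(1-\alpha)y\succ x$ (where $\succ$ is the strict part of $\succeq$). *)

theory Defs
  imports "HOL-Analysis.Analysis"
begin

text \<open>Finite-support probability distributions on a prize set \<open>P\<close>,
  represented as functions real => real (probability mass at each prize).\<close>

definition supp :: "(real \<Rightarrow> real) \<Rightarrow> real set" where
  "supp q = {x. q x \<noteq> 0}"

definition lotteries :: "real set \<Rightarrow> (real \<Rightarrow> real) set" where
  "lotteries P = {q. finite (supp q) \<and> supp q \<subseteq> P \<and> (\<forall>x. 0 \<le> q x)
                      \<and> (\<Sum>x\<in>supp q. q x) = 1}"

definition mix :: "real \<Rightarrow> (real \<Rightarrow> real) \<Rightarrow> (real \<Rightarrow> real) \<Rightarrow> (real \<Rightarrow> real)" where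
  "mix a q q' = (\<lambda>x. a * q x + (1 - a) * q' x)"

definition contracts :: "real set \<Rightarrow> ('s \<Rightarrow> (real \<Rightarrow> real)) set" where
  "contracts P = {w. \<forall>s. w s \<in> lotteries P}"

definition const :: "(real \<Rightarrow> real) \<Rightarrow> ('s \<Rightarrow> (real \<Rightarrow> real))" where
  "const q = (\<lambda>_. q)"

definition prob_simplex :: "('s::finite \<Rightarrow> real) set" where
  "prob_simplex = {p. (\<forall>s. 0 \<le> p s) \<and> (\<Sum>s\<in>UNIV. p s) = 1}"

definition EU :: "(real \<Rightarrow> real) \<Rightarrow> (real \<Rightarrow> real) \<Rightarrow> real" where
  "EU u q = (\<Sum>x\<in>supp q. q x * u x)"

definition grounded :: "(('s::finite \<Rightarrow> real) \<Rightarrow> ereal) \<Rightarrow> bool" where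
  "grounded c \<longleftrightarrow> (INF p\<in>prob_simplex. c p) = 0"

definition convex_cost :: "(('s::finite \<Rightarrow> real) \<Rightarrow> ereal) \<Rightarrow> bool" where
  "convex_cost c \<longleftrightarrow> (\<forall>p\<in>prob_simplex. \<forall>q\<in>prob_simplex. \<forall>a::real. 0 \<le> a \<and> a \<le> 1 \<longrightarrow>
      c (\<lambda>s. a * p s + (1 - a) * q s) \<le> ereal a * c p + ereal (1 - a) * c q)"

definition lsc_cost :: "(('s::finite \<Rightarrow> real) \<Rightarrow> ereal) \<Rightarrow> bool" where
  "lsc_cost c \<longleftrightarrow> (\<forall>p\<in>prob_simplex. \<forall>X. (\<forall>n. X n \<in> prob_simplex) \<longrightarrow>
      (\<forall>s. (\<lambda>n. X n s) \<longlonglongrightarrow> p s) \<longrightarrow> c p \<le> liminf (\<lambda>n. c (X n)))"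

text \<open>Value of a contract: \<open>max_p [-c(p) + \<Sum>_s u(w(s)) p(s)]\<close> (the max exists since c is lsc
  and the prob_simplex is compact, so it coincides with the supremum).\<close>
definition contract_value :: "(('s::finite \<Rightarrow> real) \<Rightarrow> ereal) \<Rightarrow> (real \<Rightarrow> real) \<Rightarrow> ('s \<Rightarrow> (real \<Rightarrow> real)) \<Rightarrow> ereal" where
  "contract_value c u w = (SUP p\<in>prob_simplex. - c p + ereal (\<Sum>s\<in>UNIV. EU u (w s) * p s))"

definition parsimonious_rep ::
  "real set \<Rightarrow> real \<Rightarrow> real \<Rightarrow> (('s::finite \<Rightarrow> (real \<Rightarrow> real)) \<Rightarrow> ('s \<Rightarrow> (real \<Rightarrow> real)) \<Rightarrow> bool)
   \<Rightarrow> (('s \<Rightarrow> real) \<Rightarrow> ereal) \<Rightarrow> (real \<Rightarrow> real) \<Rightarrow> bool" where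
  "parsimonious_rep P \<pi>0 \<pi>1 R c u \<longleftrightarrow>
     (\<forall>p\<in>prob_simplex. 0 \<le> c p) \<and> grounded c \<and> convex_cost c \<and> lsc_cost c \<and>
     strict_mono_on P u \<and> {u \<pi>0, u \<pi>1} = {0, 1} \<and>
     (\<forall>w\<in>contracts P. \<forall>w'\<in>contracts P. R w w' \<longleftrightarrow> contract_value c u w \<ge> contract_value c u w')"

text \<open>Moral-hazard preference: equivalently, a relation admitting some parsimonious representation.\<close>
definition moral_hazard_pref ::
  "real set \<Rightarrow> real \<Rightarrow> real \<Rightarrow> (('s::finite \<Rightarrow> (real \<Rightarrow> real)) \<Rightarrow> ('s \<Rightarrow> (real \<Rightarrow> real)) \<Rightarrow> bool) \<Rightarrow> bool" where
  "moral_hazard_pref P \<pi>0 \<pi>1 R \<longleftrightarrow> (\<exists>c u. parsimonious_rep P \<pi>0 \<pi>1 R c u)"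

definition strict_pref :: "('w \<Rightarrow> 'w \<Rightarrow> bool) \<Rightarrow> 'w \<Rightarrow> 'w \<Rightarrow> bool" where
  "strict_pref R a b \<longleftrightarrow> R a b \<and> \<not> R b a"

definition unbounded ::
  "real set \<Rightarrow> (('s \<Rightarrow> (real \<Rightarrow> real)) \<Rightarrow> ('s \<Rightarrow> (real \<Rightarrow> real)) \<Rightarrow> bool) \<Rightarrow> bool" where
  "unbounded P R \<longleftrightarrow>
    (\<exists>x\<in>lotteries P. \<exists>y\<in>lotteries P. strict_pref R (const x) (const y) \<and>
      (\<forall>a. 0 < a \<and> a < 1 \<longrightarrow>
        (\<exists>z\<in>lotteries P. \<exists>z'\<in>lotteries P.
           strict_pref R (const y) (const (mix a z x)) \<and>
           strict_pref R (const (mix a z' y)) (const x))))"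

end

theory Submission
  imports Defs
begin

text \<open>Utility is pinned down on \<open>P\<close> by the usual mixture argument: each prize is indifferent
  to a mixture of point masses at \<open>\<pi>\<^sub>0\<close>, \<open>\<pi>\<^sub>1\<close> and itself, and the normalisation fixes the
  affine freedom. Unboundedness makes expected utility take every real value, so every
  utility profile \<open>U \<in> \<real>\<^sup>S\<close> is realised by a contract, and the preference therefore determines
  the convex conjugate \<open>c\<^sup>*(U) = sup\<^sub>p (U \<cdot> p - c p)\<close> for all \<open>U\<close>. A convex lower semicontinuous
  \<open>c\<close> is recovered from \<open>c\<^sup>*\<close>: separating a point strictly below the graph of \<open>c\<close> from its
  closed convex epigraph yields an affine minorant through that point.\<close>

section \<open>Lotteries and expected utility\<close>

lemma sum_supp_superset:
  assumes "finite F" "supp q \<subseteq> F" "\<And>x. q x = 0 \<Longrightarrow> f x = 0"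
  shows "(\<Sum>x\<in>supp q. f x) = (\<Sum>x\<in>F. f x)"
  by (rule sum.mono_neutral_left) (use assms in \<open>auto simp: supp_def\<close>)

lemma lottery_sum_superset:
  assumes "q \<in> lotteries P" "finite F" "supp q \<subseteq> F"
  shows "(\<Sum>x\<in>F. q x) = 1"
  using assms sum_supp_superset[of F q q] by (simp add: lotteries_def)

lemma EU_superset:
  assumes "finite F" "supp q \<subseteq> F"
  shows "EU u q = (\<Sum>x\<in>F. q x * u x)"
  unfolding EU_def by (rule sum_supp_superset) (use assms in auto)

lemma supp_mix: "supp (mix a q q') \<subseteq> supp q \<union> supp q'"
  by (auto simp: supp_def mix_def)

lemma mix_in_lotteries:
  assumes q: "q \<in> lotteries P" and q': "q' \<in> lotteries P" and "0 \<le> a" "a \<le> 1"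
  shows "mix a q q' \<in> lotteries P"
proof -
  let ?F = "supp q \<union> supp q'"
  have fin: "finite ?F" using q q' by (auto simp: lotteries_def)
  have "(\<Sum>x\<in>supp (mix a q q'). mix a q q' x) = (\<Sum>x\<in>?F. mix a q q' x)"
    by (rule sum_supp_superset[OF fin supp_mix])
  also have "\<dots> = a * (\<Sum>x\<in>?F. q x) + (1 - a) * (\<Sum>x\<in>?F. q' x)"
    unfolding mix_def by (simp only: sum.distrib sum_distrib_left)
  also have "\<dots> = 1"
    using lottery_sum_superset[OF q fin] lottery_sum_superset[OF q' fin] by simp
  finally show ?thesis
    using assms finite_subset[OF supp_mix fin] supp_mix[of a q q']
    by (auto simp: lotteries_def mix_def)
qed

lemma EU_mix:
  assumes "q \<in> lotteries P" "q' \<in> lotteries P"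
  shows "EU u (mix a q q') = a * EU u q + (1 - a) * EU u q'"
proof -
  let ?F = "supp q \<union> supp q'"
  have fin: "finite ?F" using assms by (auto simp: lotteries_def)
  have "EU u (mix a q q') = (\<Sum>x\<in>?F. a * (q x * u x) + (1 - a) * (q' x * u x))"
    unfolding EU_superset[OF fin supp_mix] by (simp add: mix_def algebra_simps)
  also have "\<dots> = a * EU u q + (1 - a) * EU u q'"
    by (simp add: sum.distrib sum_distrib_left EU_superset[OF fin])
  finally show ?thesis .
qed

lemma EU_mix_intermediate_value:
  assumes z: "z \<in> lotteries P" and z': "z' \<in> lotteries P"
    and t: "EU u z \<le> t" "t \<le> EU u z'"
  shows "\<exists>q\<in>lotteries P. EU u q = t"
proof (cases "EU u z = EU u z'")
  case True
  then show ?thesis using z t by force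
next
  case False
  define l where "l = (t - EU u z) / (EU u z' - EU u z)"
  have l: "0 \<le> l" "l \<le> 1" using t False by (auto simp: l_def field_simps)
  have "EU u (mix l z' z) = EU u z + l * (EU u z' - EU u z)"
    by (simp add: EU_mix[OF z' z] algebra_simps)
  also have "\<dots> = t" using False by (simp add: l_def)
  finally show ?thesis using mix_in_lotteries[OF z' z l] by blast
qed

definition point_mass :: "real \<Rightarrow> real \<Rightarrow> real" where
  "point_mass x = (\<lambda>t. if t = x then 1 else 0)"

lemma supp_point_mass: "supp (point_mass x) = {x}"
  by (auto simp: supp_def point_mass_def)

lemma point_mass_in_lotteries: "x \<in> P \<Longrightarrow> point_mass x \<in> lotteries P"
  by (auto simp: lotteries_def supp_point_mass) (auto simp: point_mass_def)

lemma EU_point_mass [simp]: "EU u (point_mass x) = u x"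
  unfolding EU_def supp_point_mass by (simp add: point_mass_def)

lemma EU_cong:
  assumes "q \<in> lotteries P" "\<forall>x\<in>P. u' x = u x"
  shows "EU u' q = EU u q"
  using assms unfolding EU_def lotteries_def by (auto intro!: sum.cong)

section \<open>The conjugate of a cost function\<close>

definition cost_conjugate :: "(('s::finite \<Rightarrow> real) \<Rightarrow> ereal) \<Rightarrow> ('s \<Rightarrow> real) \<Rightarrow> ereal" where
  "cost_conjugate c U = (SUP p\<in>prob_simplex. - c p + ereal (\<Sum>s\<in>UNIV. U s * p s))"

lemma contract_value_eq_cost_conjugate:
  "contract_value c u w = cost_conjugate c (\<lambda>s. EU u (w s))"
  by (simp add: contract_value_def cost_conjugate_def)

lemma prob_simplex_le_1:
  assumes "p \<in> prob_simplex"
  shows "p s \<le> 1"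
proof -
  have "p s \<le> sum p UNIV" by (rule member_le_sum) (use assms in \<open>auto simp: prob_simplex_def\<close>)
  then show ?thesis using assms by (simp add: prob_simplex_def)
qed

lemma prob_simplex_mix:
  assumes "p \<in> prob_simplex" "q \<in> prob_simplex" "0 \<le> a" "a \<le> 1"
  shows "(\<lambda>s. a * p s + (1 - a) * q s) \<in> prob_simplex"
  using assms by (auto simp: prob_simplex_def sum.distrib sum_distrib_left[symmetric])

lemma grounded_obtains_small_cost:
  assumes "grounded c"
  obtains p where "p \<in> prob_simplex" "c p < 1"
proof -
  have "(INF p\<in>prob_simplex. c p) < 1" using assms by (simp add: grounded_def)
  then show ?thesis using that by (auto simp: INF_less_iff)
qed

lemma cost_conjugate_const:
  fixes c :: "('s::finite \<Rightarrow> real) \<Rightarrow> ereal"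
  assumes "grounded c"
  shows "cost_conjugate c (\<lambda>s. k) = ereal k"
proof -
  have ne: "prob_simplex \<noteq> ({} :: ('s \<Rightarrow> real) set)"
    using grounded_obtains_small_cost[OF assms] by blast
  have "cost_conjugate c (\<lambda>s. k) = (SUP p\<in>prob_simplex. - c p + ereal k)"
    unfolding cost_conjugate_def
    by (rule SUP_cong) (auto simp: prob_simplex_def sum_distrib_left[symmetric])
  also have "\<dots> = - (INF p\<in>prob_simplex. c p) + ereal k"
    by (simp add: SUP_ereal_add_left[OF ne] ereal_SUP_uminus_eq)
  finally show ?thesis using assms by (simp add: grounded_def)
qed

lemma cost_conjugate_finite:
  fixes c :: "('s::finite \<Rightarrow> real) \<Rightarrow> ereal"
  assumes nonneg: "\<forall>p\<in>prob_simplex. 0 \<le> c p" and "grounded c"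
  obtains k where "cost_conjugate c U = ereal k"
proof -
  obtain p1 where p1: "p1 \<in> prob_simplex" "c p1 < 1"
    using grounded_obtains_small_cost[OF assms(2)] .
  have "cost_conjugate c U \<le> ereal (\<Sum>s\<in>UNIV. \<bar>U s\<bar>)"
    unfolding cost_conjugate_def
  proof (rule SUP_least)
    fix p :: "'s \<Rightarrow> real" assume p: "p \<in> prob_simplex"
    have "U s * p s \<le> \<bar>U s\<bar>" for s
    proof -
      have "0 \<le> p s" "p s \<le> 1" using p prob_simplex_le_1[OF p] by (auto simp: prob_simplex_def)
      then have "U s * p s \<le> \<bar>U s\<bar> * p s" by (intro mult_right_mono) auto
      also have "\<dots> \<le> \<bar>U s\<bar>" using \<open>p s \<le> 1\<close> by (intro mult_left_le) auto
      finally show ?thesis .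
    qed
    then have "(\<Sum>s\<in>UNIV. U s * p s) \<le> (\<Sum>s\<in>UNIV. \<bar>U s\<bar>)" by (rule sum_mono)
    moreover have "- c p \<le> 0" using nonneg p by simp
    ultimately show "- c p + ereal (\<Sum>s\<in>UNIV. U s * p s) \<le> ereal (\<Sum>s\<in>UNIV. \<bar>U s\<bar>)"
      using add_mono[of "- c p" 0 "ereal (\<Sum>s\<in>UNIV. U s * p s)"] by simp
  qed
  moreover have "- c p1 + ereal (\<Sum>s\<in>UNIV. U s * p1 s) \<le> cost_conjugate c U"
    unfolding cost_conjugate_def using p1(1) by (rule SUP_upper)
  moreover have "c p1 \<noteq> \<infinity>" "c p1 \<noteq> -\<infinity>" using nonneg p1 by auto
  ultimately have "cost_conjugate c U \<noteq> \<infinity>" "cost_conjugate c U \<noteq> -\<infinity>" by auto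
  then show ?thesis using that by (cases "cost_conjugate c U") auto
qed

section \<open>Recovering a convex lower semicontinuous cost from its conjugate\<close>

lemma vec_nth_vec_lambda [simp]: "vec_nth (vec_lambda f) = f"
  by (rule ext) simp

definition cost_epigraph :: "(('s::finite \<Rightarrow> real) \<Rightarrow> ereal) \<Rightarrow> ((real^'s) \<times> real) set" where
  "cost_epigraph c = {(v, t). vec_nth v \<in> prob_simplex \<and> c (vec_nth v) \<le> ereal t}"

lemma convex_cost_epigraph:
  fixes c :: "('s::finite \<Rightarrow> real) \<Rightarrow> ereal"
  assumes "convex_cost c"
  shows "convex (cost_epigraph c)"
  unfolding convex_alt
proof (intro ballI allI impI)
  fix x y :: "(real^'s) \<times> real" and a :: real
  assume x: "x \<in> cost_epigraph c" and y: "y \<in> cost_epigraph c" and a: "0 \<le> a \<and> a \<le> 1"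
  obtain v1 t1 v2 t2 where xy: "x = (v1, t1)" "y = (v2, t2)" by (cases x, cases y)
  have p: "vec_nth v1 \<in> prob_simplex" "vec_nth v2 \<in> prob_simplex"
    and t: "c (vec_nth v1) \<le> ereal t1" "c (vec_nth v2) \<le> ereal t2"
    using x y xy by (auto simp: cost_epigraph_def)
  let ?p = "\<lambda>s. a * v2 $ s + (1 - a) * v1 $ s"
  have "c ?p \<le> ereal a * c (vec_nth v2) + ereal (1 - a) * c (vec_nth v1)"
    by (rule assms[unfolded convex_cost_def, rule_format]) (use p a in auto)
  also have "\<dots> \<le> ereal a * ereal t2 + ereal (1 - a) * ereal t1"
    using a t by (intro add_mono ereal_mult_left_mono) auto
  finally have "c ?p \<le> ereal ((1 - a) * t1 + a * t2)" by (simp add: add.commute)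
  moreover have "?p \<in> prob_simplex" using prob_simplex_mix[OF p(2,1)] a by simp
  moreover have "vec_nth ((1 - a) *\<^sub>R v1 + a *\<^sub>R v2) = ?p" by (rule ext) simp
  ultimately show "(1 - a) *\<^sub>R x + a *\<^sub>R y \<in> cost_epigraph c"
    by (simp add: xy cost_epigraph_def)
qed

lemma LIMSEQ_prob_simplex:
  assumes "\<And>n. X n \<in> prob_simplex" "\<And>s. (\<lambda>n. X n s) \<longlonglongrightarrow> p s"
  shows "p \<in> prob_simplex"
proof -
  have "0 \<le> p s" for s
    by (rule LIMSEQ_le_const[OF assms(2)]) (use assms(1) in \<open>auto simp: prob_simplex_def\<close>)
  moreover have "(\<lambda>n. \<Sum>s\<in>UNIV. X n s) \<longlonglongrightarrow> (\<Sum>s\<in>UNIV. p s)"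
    by (intro tendsto_sum assms(2))
  then have "(\<Sum>s\<in>UNIV. p s) = 1"
    using assms(1) by (simp add: prob_simplex_def LIMSEQ_const_iff)
  ultimately show ?thesis by (simp add: prob_simplex_def)
qed

lemma closed_cost_epigraph:
  fixes c :: "('s::finite \<Rightarrow> real) \<Rightarrow> ereal"
  assumes "lsc_cost c"
  shows "closed (cost_epigraph c)"
  unfolding closed_sequential_limits
proof (intro allI impI)
  fix X :: "nat \<Rightarrow> (real^'s) \<times> real" and L
  assume X: "(\<forall>n. X n \<in> cost_epigraph c) \<and> X \<longlonglongrightarrow> L"
  obtain v t where L: "L = (v, t)" by (cases L)
  have Xn: "vec_nth (fst (X n)) \<in> prob_simplex" "c (vec_nth (fst (X n))) \<le> ereal (snd (X n))" for n
    using X by (auto simp: cost_epigraph_def case_prod_unfold)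
  have lim_t: "(\<lambda>n. snd (X n)) \<longlonglongrightarrow> t" using X L tendsto_snd by fastforce
  have "(\<lambda>n. fst (X n)) \<longlonglongrightarrow> v" using X L tendsto_fst by fastforce
  then have lim_p: "(\<lambda>n. fst (X n) $ s) \<longlonglongrightarrow> v $ s" for s by (rule tendsto_vec_nth)
  have p: "vec_nth v \<in> prob_simplex" by (rule LIMSEQ_prob_simplex[OF Xn(1) lim_p])
  have "c (vec_nth v) \<le> liminf (\<lambda>n. c (vec_nth (fst (X n))))"
    using assms[unfolded lsc_cost_def, rule_format, OF p, of "\<lambda>n. vec_nth (fst (X n))"] Xn(1) lim_p
    by simp
  also have "\<dots> \<le> liminf (\<lambda>n. ereal (snd (X n)))"
    by (rule Liminf_mono) (use Xn(2) in auto)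
  also have "\<dots> = ereal t"
    by (rule lim_imp_Liminf) (use lim_t in auto)
  finally show "L \<in> cost_epigraph c" using p by (simp add: L cost_epigraph_def)
qed

lemma cost_epigraph_separation:
  assumes "convex_cost c" "lsc_cost c" and p0: "p0 \<in> prob_simplex" and r: "ereal r < c p0"
  obtains A \<beta> b where "(\<Sum>s\<in>UNIV. A s * p0 s) + \<beta> * r < b"
    and "\<And>p t. p \<in> prob_simplex \<Longrightarrow> c p \<le> ereal t \<Longrightarrow> b < (\<Sum>s\<in>UNIV. A s * p s) + \<beta> * t"
proof -
  have "(vec_lambda p0, r) \<notin> cost_epigraph c" using r by (auto simp: cost_epigraph_def)
  then obtain a b where ab: "inner a (vec_lambda p0, r) < b"
    "\<forall>x\<in>cost_epigraph c. b < inner a x"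
    using separating_hyperplane_closed_point[OF convex_cost_epigraph closed_cost_epigraph] assms
    by blast
  obtain A \<beta> where a: "a = (A, \<beta>)" by (cases a)
  have inner_eq: "inner a (vec_lambda p, t) = (\<Sum>s\<in>UNIV. A $ s * p s) + \<beta> * t" for p t
    by (simp add: a inner_prod_def inner_vec_def mult.commute)
  show ?thesis
  proof (rule that[of "vec_nth A" \<beta> b])
    show "(\<Sum>s\<in>UNIV. A $ s * p0 s) + \<beta> * r < b" using ab(1) inner_eq by simp
    fix p t assume "p \<in> prob_simplex" "c p \<le> ereal t"
    then have "(vec_lambda p, t) \<in> cost_epigraph c" by (simp add: cost_epigraph_def)
    then show "b < (\<Sum>s\<in>UNIV. A $ s * p s) + \<beta> * t" using ab(2) inner_eq by metis
  qed
qed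

lemma vertical_coefficient_nonneg:
  assumes "grounded c"
    and above: "\<And>p t. p \<in> prob_simplex \<Longrightarrow> c p \<le> ereal t \<Longrightarrow> b < (\<Sum>s\<in>UNIV. A s * p s) + \<beta> * t"
  shows "0 \<le> \<beta>"
proof (rule ccontr)
  assume "\<not> 0 \<le> \<beta>"
  obtain p1 where p1: "p1 \<in> prob_simplex" "c p1 < 1" using grounded_obtains_small_cost[OF assms(1)] .
  \<comment> \<open>The epigraph contains the vertical ray above \<open>(p1, 1)\<close>.\<close>
  define t where "t = max 1 (((\<Sum>s\<in>UNIV. A s * p1 s) - b) / (- \<beta>))"
  have "1 \<le> t" by (simp add: t_def)
  then have "(1::ereal) \<le> ereal t" by simp
  then have "c p1 \<le> ereal t" using p1(2) by (meson order.strict_implies_order order_trans)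
  have "((\<Sum>s\<in>UNIV. A s * p1 s) - b) / (- \<beta>) \<le> t" by (simp add: t_def)
  with \<open>\<not> 0 \<le> \<beta>\<close> have "(\<Sum>s\<in>UNIV. A s * p1 s) + \<beta> * t \<le> b"
    by (simp add: field_simps)
  with above[OF p1(1) \<open>c p1 \<le> ereal t\<close>] show False by simp
qed

lemma affine_minorant_through_point:
  fixes c :: "('s::finite \<Rightarrow> real) \<Rightarrow> ereal"
  assumes nonneg: "\<forall>p\<in>prob_simplex. 0 \<le> c p" and g: "grounded c"
    and cv: "convex_cost c" and l: "lsc_cost c"
    and p0: "p0 \<in> prob_simplex" and r: "ereal r < c p0"
  obtains U where "\<And>p t. p \<in> prob_simplex \<Longrightarrow> c p \<le> ereal t \<Longrightarrow>
    r + (\<Sum>s\<in>UNIV. U s * (p s - p0 s)) \<le> t"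
proof -
  obtain A \<beta> b where below: "(\<Sum>s\<in>UNIV. A s * p0 s) + \<beta> * r < b"
    and above: "\<And>p t. p \<in> prob_simplex \<Longrightarrow> c p \<le> ereal t \<Longrightarrow> b < (\<Sum>s\<in>UNIV. A s * p s) + \<beta> * t"
    using cost_epigraph_separation[OF cv l p0 r] by blast
  let ?d = "\<lambda>p. (\<Sum>s\<in>UNIV. A s * p s) - (\<Sum>s\<in>UNIV. A s * p0 s)"
  have lin: "(\<Sum>s\<in>UNIV. (k * A s) * (p s - p0 s)) = k * ?d p" for k p
    by (simp add: sum_distrib_left sum_subtractf algebra_simps)
  have "0 \<le> \<beta>" using vertical_coefficient_nonneg[OF g above] .
  show ?thesis
  proof (cases "\<beta> = 0")
    case False
    with \<open>0 \<le> \<beta>\<close> have "0 < \<beta>" by simp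
    show ?thesis
    proof (rule that[of "\<lambda>s. - 1 / \<beta> * A s"])
      fix p t assume "p \<in> prob_simplex" "c p \<le> ereal t"
      from above[OF this] below have "\<beta> * r - ?d p \<le> \<beta> * t" by linarith
      with \<open>0 < \<beta>\<close> show "r + (\<Sum>s\<in>UNIV. (- 1 / \<beta> * A s) * (p s - p0 s)) \<le> t"
        unfolding lin by (simp add: field_simps)
    qed
  next
    case True
    \<comment> \<open>The hyperplane is vertical; tilted steeply enough it becomes an affine minorant of
      the nonnegative \<open>c\<close> taking the value \<open>r\<close> at \<open>p0\<close>.\<close>
    define k where "k = max 0 (r / (b - (\<Sum>s\<in>UNIV. A s * p0 s)))"
    have "0 < b - (\<Sum>s\<in>UNIV. A s * p0 s)" using below True by simp
    moreover have "r / (b - (\<Sum>s\<in>UNIV. A s * p0 s)) \<le> k" by (simp add: k_def)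
    ultimately have kr: "r \<le> k * (b - (\<Sum>s\<in>UNIV. A s * p0 s))"
      by (simp add: field_simps)
    show ?thesis
    proof (rule that[of "\<lambda>s. - k * A s"])
      fix p t assume p: "p \<in> prob_simplex" and t: "c p \<le> ereal t"
      have "0 \<le> t" using nonneg p t by (metis ereal_less_eq(5) order_trans)
      moreover have "k * (b - (\<Sum>s\<in>UNIV. A s * p0 s)) \<le> k * ?d p"
        using above[OF p t] True by (intro mult_left_mono) (auto simp: k_def)
      ultimately show "r + (\<Sum>s\<in>UNIV. (- k * A s) * (p s - p0 s)) \<le> t"
        unfolding lin using kr by simp
    qed
  qed
qed

lemma cost_le_of_cost_conjugate_le:
  fixes c c' :: "('s::finite \<Rightarrow> real) \<Rightarrow> ereal"
  assumes nonneg: "\<forall>p\<in>prob_simplex. 0 \<le> c p" and "grounded c" "convex_cost c" "lsc_cost c"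
    and nonneg': "\<forall>p\<in>prob_simplex. 0 \<le> c' p"
    and conj_le: "\<And>U. cost_conjugate c' U \<le> cost_conjugate c U"
    and p0: "p0 \<in> prob_simplex"
  shows "c p0 \<le> c' p0"
proof (rule ccontr)
  assume "\<not> c p0 \<le> c' p0"
  then have "c' p0 < c p0" by simp
  then obtain r where r: "c' p0 < ereal r" "ereal r < c p0"
    using ereal_dense2 by blast
  obtain U where U: "\<And>p t. p \<in> prob_simplex \<Longrightarrow> c p \<le> ereal t \<Longrightarrow>
      r + (\<Sum>s\<in>UNIV. U s * (p s - p0 s)) \<le> t"
    using affine_minorant_through_point[OF assms(1-4) p0 r(2)] by blast
  define S0 where "S0 = (\<Sum>s\<in>UNIV. U s * p0 s)"
  have "cost_conjugate c U \<le> ereal (S0 - r)"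
    unfolding cost_conjugate_def
  proof (rule SUP_least)
    fix p :: "'s \<Rightarrow> real" assume p: "p \<in> prob_simplex"
    show "- c p + ereal (\<Sum>s\<in>UNIV. U s * p s) \<le> ereal (S0 - r)"
    proof (cases "c p")
      case (real t)
      then have "r + (\<Sum>s\<in>UNIV. U s * (p s - p0 s)) \<le> t" using U p by simp
      then show ?thesis
        using real by (simp add: S0_def right_diff_distrib sum_subtractf)
    qed (use nonneg p in auto)
  qed
  obtain t' where t': "c' p0 = ereal t'"
    using r(1) nonneg' p0 by (cases "c' p0") auto
  have "- c' p0 + ereal S0 \<le> cost_conjugate c' U"
    unfolding cost_conjugate_def S0_def using p0 by (rule SUP_upper)
  also note conj_le
  also note \<open>cost_conjugate c U \<le> ereal (S0 - r)\<close>
  finally have "ereal (S0 - t') \<le> ereal (S0 - r)" using t' by simp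
  with r(1) t' show False by simp
qed

section \<open>Consequences of a parsimonious representation\<close>

lemma parsimonious_rep_normalised:
  assumes "parsimonious_rep P \<pi>0 \<pi>1 R c u" "\<pi>0 \<in> P" "\<pi>1 \<in> P" "\<pi>0 < \<pi>1"
  shows "u \<pi>0 = 0" "u \<pi>1 = 1"
proof -
  have "u \<pi>0 < u \<pi>1" using assms by (auto simp: parsimonious_rep_def strict_mono_on_def)
  moreover have "{u \<pi>0, u \<pi>1} = {0, 1}" using assms by (simp add: parsimonious_rep_def)
  ultimately show "u \<pi>0 = 0" "u \<pi>1 = 1" by (auto simp: doubleton_eq_iff)
qed

lemma parsimonious_rep_iff:
  assumes "parsimonious_rep P \<pi>0 \<pi>1 R c u" "w \<in> contracts P" "w' \<in> contracts P"
  shows "R w w' \<longleftrightarrow> contract_value c u w' \<le> contract_value c u w"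
  using assms unfolding parsimonious_rep_def by blast

lemma const_in_contracts: "q \<in> lotteries P \<Longrightarrow> const q \<in> contracts P"
  by (simp add: const_def contracts_def)

lemma contract_value_const:
  assumes "parsimonious_rep P \<pi>0 \<pi>1 R c u"
  shows "contract_value c u (const q) = ereal (EU u q)"
  using assms cost_conjugate_const[of c "EU u q"]
  by (simp add: contract_value_eq_cost_conjugate const_def parsimonious_rep_def)

lemma parsimonious_rep_const_iff:
  assumes "parsimonious_rep P \<pi>0 \<pi>1 R c u" "q \<in> lotteries P" "q' \<in> lotteries P"
  shows "R (const q) (const q') \<longleftrightarrow> EU u q' \<le> EU u q"
  using parsimonious_rep_iff[OF assms(1) const_in_contracts const_in_contracts] assms
  by (simp add: contract_value_const[OF assms(1)])

lemma parsimonious_rep_strict_const_iff: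
  assumes "parsimonious_rep P \<pi>0 \<pi>1 R c u" "q \<in> lotteries P" "q' \<in> lotteries P"
  shows "strict_pref R (const q) (const q') \<longleftrightarrow> EU u q' < EU u q"
  using parsimonious_rep_const_iff[OF assms] parsimonious_rep_const_iff[OF assms(1,3,2)]
  by (auto simp: strict_pref_def)

lemma parsimonious_rep_EU_indifference:
  assumes "parsimonious_rep P \<pi>0 \<pi>1 R c u" "parsimonious_rep P \<pi>0 \<pi>1 R c' u'"
    and "q \<in> lotteries P" "q' \<in> lotteries P" "EU u q = EU u q'"
  shows "EU u' q = EU u' q'"
  using parsimonious_rep_const_iff[OF assms(1,3,4)] parsimonious_rep_const_iff[OF assms(1,4,3)]
    parsimonious_rep_const_iff[OF assms(2,3,4)] parsimonious_rep_const_iff[OF assms(2,4,3)] assms(5)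
  by auto

lemma parsimonious_rep_utility_unique:
  assumes r: "parsimonious_rep P \<pi>0 \<pi>1 R c u" and r': "parsimonious_rep P \<pi>0 \<pi>1 R c' u'"
    and \<pi>: "\<pi>0 \<in> P" "\<pi>1 \<in> P" "\<pi>0 < \<pi>1" and x: "x \<in> P"
  shows "u' x = u x"
proof -
  note indiff = parsimonious_rep_EU_indifference[OF r r']
  note norm = parsimonious_rep_normalised[OF r \<pi>] parsimonious_rep_normalised[OF r' \<pi>]
  have \<delta>: "point_mass x \<in> lotteries P" "point_mass \<pi>0 \<in> lotteries P" "point_mass \<pi>1 \<in> lotteries P"
    using x \<pi> by (auto intro: point_mass_in_lotteries)
  consider "0 \<le> u x" "u x \<le> 1" | "1 < u x" | "u x < 0" by linarith
  then show ?thesis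
  proof cases
    case 1
    let ?q = "mix (u x) (point_mass \<pi>1) (point_mass \<pi>0)"
    have "EU u' (point_mass x) = EU u' ?q"
      using 1 norm by (intro indiff \<delta>(1) mix_in_lotteries[OF \<delta>(3,2)]) (simp_all add: EU_mix[OF \<delta>(3,2)])
    then show ?thesis using norm by (simp add: EU_mix[OF \<delta>(3,2)])
  next
    case 2
    let ?q = "mix (1 / u x) (point_mass x) (point_mass \<pi>0)"
    have "EU u' ?q = EU u' (point_mass \<pi>1)"
      using 2 norm by (intro indiff \<delta>(3) mix_in_lotteries[OF \<delta>(1,2)]) (simp_all add: EU_mix[OF \<delta>(1,2)])
    then have "u' x / u x = 1" using norm by (simp add: EU_mix[OF \<delta>(1,2)])
    then show ?thesis using 2 by (simp add: field_simps)
  next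
    case 3
    define a where "a = 1 / (1 - u x)"
    have a: "0 < a" "a < 1" "a * u x + (1 - a) = 0" using 3 by (auto simp: a_def field_simps)
    let ?q = "mix a (point_mass x) (point_mass \<pi>1)"
    have "EU u' ?q = EU u' (point_mass \<pi>0)"
      using a norm by (intro indiff \<delta>(2) mix_in_lotteries[OF \<delta>(1,3)]) (simp_all add: EU_mix[OF \<delta>(1,3)])
    then have "a * u' x + (1 - a) = 0" using norm by (simp add: EU_mix[OF \<delta>(1,3)])
    with a(3) have "a * u' x = a * u x" by linarith
    then show ?thesis using a(1) by simp
  qed
qed

lemma unbounded_EU_brackets:
  assumes r: "parsimonious_rep P \<pi>0 \<pi>1 R c u" and "unbounded P R"
  shows "\<exists>z\<in>lotteries P. \<exists>z'\<in>lotteries P. EU u z \<le> t \<and> t \<le> EU u z'"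
proof -
  obtain x y where x: "x \<in> lotteries P" and y: "y \<in> lotteries P"
    and xy: "strict_pref R (const x) (const y)"
    and mixes: "\<And>a. 0 < a \<Longrightarrow> a < 1 \<Longrightarrow> \<exists>z\<in>lotteries P. \<exists>z'\<in>lotteries P.
       strict_pref R (const y) (const (mix a z x)) \<and> strict_pref R (const (mix a z' y)) (const x)"
    using assms(2) unfolding unbounded_def by blast
  define d where "d = EU u x - EU u y"
  define K where "K = d + \<bar>t\<bar> + \<bar>EU u x\<bar> + \<bar>EU u y\<bar> + 1"
  define a where "a = d / K"
  have "0 < d" using xy by (simp add: d_def parsimonious_rep_strict_const_iff[OF r x y])
  then have a: "0 < a" "a < 1" "a * K = d" by (auto simp: a_def K_def field_simps)
  obtain z z' where z: "z \<in> lotteries P" "z' \<in> lotteries P"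
    and below: "strict_pref R (const y) (const (mix a z x))"
    and above: "strict_pref R (const (mix a z' y)) (const x)"
    using mixes[OF a(1,2)] by blast
  \<comment> \<open>\<open>a K = d\<close> turns the two strict preferences into the following bounds.\<close>
  have low: "a * (EU u z - EU u x) < a * (- K)"
    using below a(1,2) mix_in_lotteries[OF z(1) x] a(3)
    by (simp add: parsimonious_rep_strict_const_iff[OF r y] EU_mix[OF z(1) x] d_def algebra_simps)
  have high: "a * K < a * (EU u z' - EU u y)"
    using above a(1,2) mix_in_lotteries[OF z(2) y] a(3)
    by (simp add: parsimonious_rep_strict_const_iff[OF r _ x] EU_mix[OF z(2) y] d_def algebra_simps)
  have "EU u z < EU u x - K" "EU u y + K < EU u z'"
    using mult_left_less_imp_less[OF low] mult_left_less_imp_less[OF high] a(1) by simp_all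
  moreover have "EU u x - K \<le> t" "t \<le> EU u y + K"
    using \<open>0 < d\<close> by (auto simp: K_def)
  ultimately show ?thesis using z by force
qed

lemma unbounded_EU_surj:
  assumes "parsimonious_rep P \<pi>0 \<pi>1 R c u" "unbounded P R"
  shows "\<exists>q\<in>lotteries P. EU u q = t"
  using unbounded_EU_brackets[OF assms] EU_mix_intermediate_value by blast

lemma parsimonious_rep_cost_conjugate_eq:
  fixes c c' :: "('s::finite \<Rightarrow> real) \<Rightarrow> ereal"
  assumes r: "parsimonious_rep P \<pi>0 \<pi>1 (R :: ('s \<Rightarrow> real \<Rightarrow> real) \<Rightarrow> _ \<Rightarrow> bool) c u"
    and r': "parsimonious_rep P \<pi>0 \<pi>1 R c' u'"
    and uu: "\<forall>x\<in>P. u' x = u x" and surj: "\<And>t. \<exists>q\<in>lotteries P. EU u q = t"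
  shows "cost_conjugate c U = cost_conjugate c' U"
proof -
  obtain L where L: "\<And>t. L t \<in> lotteries P" "\<And>t. EU u (L t) = t"
    using surj by (metis (mono_tags))
  have EU'_L: "EU u' (L t) = t" for t using EU_cong[OF L(1) uu] L(2) by simp
  define w :: "'s \<Rightarrow> real \<Rightarrow> real" where "w = (\<lambda>s. L (U s))"
  have w: "w \<in> contracts P" using L by (simp add: w_def contracts_def)
  have v: "contract_value c u w = cost_conjugate c U" "contract_value c' u' w = cost_conjugate c' U"
    by (simp_all add: contract_value_eq_cost_conjugate w_def L EU'_L)
  obtain k where k: "cost_conjugate c U = ereal k"
    using cost_conjugate_finite r by (auto simp: parsimonious_rep_def)
  have q: "const (L k) \<in> contracts P" using L const_in_contracts by blast
  have "R w (const (L k))" "R (const (L k)) w"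
    using parsimonious_rep_iff[OF r w q] parsimonious_rep_iff[OF r q w] v k
    by (simp_all add: contract_value_const[OF r] L)
  then have "contract_value c' u' w = ereal k"
    using parsimonious_rep_iff[OF r' w q] parsimonious_rep_iff[OF r' q w]
    by (simp add: contract_value_const[OF r'] EU'_L)
  then show ?thesis using v k by simp
qed

theorem proposition2:
  fixes P :: "real set" and \<pi>0 \<pi>1 :: real
    and R :: "('s::finite \<Rightarrow> (real \<Rightarrow> real)) \<Rightarrow> ('s \<Rightarrow> (real \<Rightarrow> real)) \<Rightarrow> bool"
  assumes "convex P" and "\<pi>0 \<in> P" and "\<pi>1 \<in> P" and "\<pi>0 < \<pi>1"
    and "moral_hazard_pref P \<pi>0 \<pi>1 R"
    and "unbounded P R"
  shows "\<exists>c u. parsimonious_rep P \<pi>0 \<pi>1 R c u \<and>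
           (\<forall>c' u'. parsimonious_rep P \<pi>0 \<pi>1 R c' u' \<longrightarrow>
              (\<forall>p\<in>prob_simplex. c' p = c p) \<and> (\<forall>x\<in>P. u' x = u x))"
proof -
  obtain c u where r: "parsimonious_rep P \<pi>0 \<pi>1 R c u"
    using assms(5) unfolding moral_hazard_pref_def by blast
  have surj: "\<And>t. \<exists>q\<in>lotteries P. EU u q = t" using unbounded_EU_surj[OF r assms(6)] .
  show ?thesis
  proof (intro exI conjI allI impI ballI)
    show "parsimonious_rep P \<pi>0 \<pi>1 R c u" by (rule r)
    fix c' u' assume r': "parsimonious_rep P \<pi>0 \<pi>1 R c' u'"
    have uu: "\<forall>x\<in>P. u' x = u x"
      using parsimonious_rep_utility_unique[OF r r' assms(2-4)] by blast
    then show "x \<in> P \<Longrightarrow> u' x = u x" for x by blast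
    have conj_eq: "cost_conjugate c U = cost_conjugate c' U" for U
      by (rule parsimonious_rep_cost_conjugate_eq[OF r r' uu surj])
    fix p :: "'s \<Rightarrow> real" assume "p \<in> prob_simplex"
    then show "c' p = c p"
      using cost_le_of_cost_conjugate_le[of c c' p] cost_le_of_cost_conjugate_le[of c' c p]
        r r' conj_eq by (auto simp: parsimonious_rep_def intro: order_antisym)
  qed
qed

end
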